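(* Let $m\ge1$ be an integer, $0<h\le1$, and $E=(\alpha+i\mu)h^{2m/(m+1)}$ with $\alpha,\mu>0$ independent of $h$. Let \[ \varphi(x)=\int_0^x(E+m^{-1}y^{2m})^{1/2}\,dy, \] where the branch of the square root is chosen to have positive imaginary part, and let \[ f=-h^2\Big(\tfrac34(\varphi')^{-2}(\varphi'')^2-\tfrac12(\varphi')^{-1}\varphi'''\Big). \] Then: (i) There exists $C>0$ independent of $h$ such that \[ |\operatorname{Im}\varphi|\le C\begin{cases}h(1+\log(x/h^{1/2})),& m=1,\\ h,& m\ge2.\end{cases} \] In particular, if $|x|\le Ch^{1/(m+1)}$, then $|\operatorname{Im}\varphi|\le C'$ for some $C'>0$ independent of $h$. (ii) There exists $C>0$ independent of $h$ such that \[ C^{-1}\sqrt{h^{2m/(m+1)}+x^{2m}}\le|\varphi'(x)|\le C\sqrt{h^{2m/(m+1)}+x^{2m}}. \] (iii) $\varphi'=(E+m^{-1}x^{2m})^{1/2}$, $\varphi''=x^{2m-1}(\varphi')^{-1}$, $\varphi'''=\big((1-m^{-1})x^{4m-2}+E(2m-1)x^{2m-2}\big)(\varphi')^{-3}$, and in particular \[ f=-h^2x^{2m-2}\Big(\big(\tfrac14+\tfrac1{2m}\big)x^{2m}-\big(m-\tfrac12\big)E\Big)(\varphi')^{-4}. \] *)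

theory Defs
  imports "HOL-Analysis.Analysis"
begin

definition sqrt_pos_im :: "complex \<Rightarrow> complex" where
  "sqrt_pos_im z = (THE w. w ^ 2 = z \<and> Im w > 0)"

definition E_par :: "nat \<Rightarrow> real \<Rightarrow> real \<Rightarrow> real \<Rightarrow> complex" where
  "E_par m \<alpha> \<mu> h = Complex \<alpha> \<mu> * complex_of_real (h powr (2 * real m / (real m + 1)))"

definition phi_integrand :: "nat \<Rightarrow> real \<Rightarrow> real \<Rightarrow> real \<Rightarrow> real \<Rightarrow> complex" where
  "phi_integrand m \<alpha> \<mu> h y =
     sqrt_pos_im (E_par m \<alpha> \<mu> h + complex_of_real (y ^ (2 * m) / real m))"

definition phi :: "nat \<Rightarrow> real \<Rightarrow> real \<Rightarrow> real \<Rightarrow> real \<Rightarrow> complex" where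
  "phi m \<alpha> \<mu> h x =
     (if 0 \<le> x then integral {0..x} (phi_integrand m \<alpha> \<mu> h)
      else - integral {x..0} (phi_integrand m \<alpha> \<mu> h))"

definition phi1 :: "nat \<Rightarrow> real \<Rightarrow> real \<Rightarrow> real \<Rightarrow> real \<Rightarrow> complex" where
  "phi1 m \<alpha> \<mu> h x = vector_derivative (phi m \<alpha> \<mu> h) (at x)"

definition phi2 :: "nat \<Rightarrow> real \<Rightarrow> real \<Rightarrow> real \<Rightarrow> real \<Rightarrow> complex" where
  "phi2 m \<alpha> \<mu> h x = vector_derivative (phi1 m \<alpha> \<mu> h) (at x)"

definition phi3 :: "nat \<Rightarrow> real \<Rightarrow> real \<Rightarrow> real \<Rightarrow> real \<Rightarrow> complex" where
  "phi3 m \<alpha> \<mu> h x = vector_derivative (phi2 m \<alpha> \<mu> h) (at x)"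

definition f_pot :: "nat \<Rightarrow> real \<Rightarrow> real \<Rightarrow> real \<Rightarrow> real \<Rightarrow> complex" where
  "f_pot m \<alpha> \<mu> h x =
     - complex_of_real (h ^ 2) *
       (3/4 * inverse (phi1 m \<alpha> \<mu> h x ^ 2) * (phi2 m \<alpha> \<mu> h x) ^ 2
        - 1/2 * inverse (phi1 m \<alpha> \<mu> h x) * phi3 m \<alpha> \<mu> h x)"

end

theory Submission
  imports Defs
begin

text \<open>
  Since Im E > 0, the branch of the square root with positive imaginary part is the principal
  branch at w = E + y^(2m)/m, so phi' = csqrt w, and (iii) is the chain and quotient rule
  followed by eliminating phi'^2 = w. With e = h^(2m/(m+1)) one has
  min alpha (1/m) (e + x^(2m)) <= Re w and |w| <= max |alpha + i mu| 1 (e + x^(2m)),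
  which gives (ii). For (i), Im (csqrt w) <= Im w / (2 sqrt (Re w)) bounds Im phi'(t) by a
  multiple of e / sqrt (e + t^(2m)). This is dominated by the derivative of
  h log (1 + t / sqrt h) when m = 1 and of h arctan (t / h^(1/(m+1))) when m >= 2; since
  Im phi' is even and nonnegative, comparing antiderivatives on [0, |x|] bounds |Im phi(x)|.
\<close>

section \<open>Complex square roots\<close>

lemma Im_pos_of_square:
  fixes s :: complex
  assumes "s ^ 2 = z" "0 \<le> Re s" "0 < Im z"
  shows "0 < Im s"
proof -
  have "Im z = 2 * Re s * Im s"
    using assms(1) by (auto simp: power2_eq_square)
  with assms(2,3) show ?thesis
    by (auto simp: zero_less_mult_iff)
qed

lemma Im_csqrt_pos: "0 < Im z \<Longrightarrow> 0 < Im (csqrt z)"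
  by (rule Im_pos_of_square[OF power2_csqrt Re_csqrt])

lemma sqrt_pos_im_eq_csqrt:
  assumes "0 < Im z"
  shows "sqrt_pos_im z = csqrt z"
  unfolding sqrt_pos_im_def
proof (rule the_equality)
  show "csqrt z ^ 2 = z \<and> 0 < Im (csqrt z)"
    by (intro conjI power2_csqrt Im_csqrt_pos assms)
next
  fix w assume w: "w ^ 2 = z \<and> 0 < Im w"
  then have "Im z = 2 * Re w * Im w"
    by (auto simp: power2_eq_square)
  with assms w have "0 < Re w"
    by (auto simp: zero_less_mult_iff)
  then show "w = csqrt z"
    using w by (intro csqrt_unique[symmetric]) auto
qed

lemma Im_sqrt_le:
  fixes s z :: complex
  assumes "s ^ 2 = z" "0 \<le> Re s" "0 < Re z" "0 \<le> Im z"
  shows "Im s \<le> Im z / (2 * sqrt (Re z))"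
proof -
  have Re_z: "Re z = Re s ^ 2 - Im s ^ 2" and Im_z: "Im z = 2 * Re s * Im s"
    using assms(1) by (auto simp: power2_eq_square)
  have lower: "sqrt (Re z) \<le> Re s"
    using Re_z assms(2) by (intro real_le_lsqrt) auto
  have sqrt_pos: "0 < sqrt (Re z)"
    using assms by simp
  with lower have Re_s_pos: "0 < Re s"
    by linarith
  then have "Im s = Im z / (2 * Re s)"
    using Im_z by (simp add: field_simps)
  also have "\<dots> \<le> Im z / (2 * sqrt (Re z))"
    using assms(4) lower sqrt_pos Re_s_pos by (intro divide_left_mono) auto
  finally show ?thesis .
qed

lemma power_split_even:
  fixes x :: "'a::monoid_mult"
  assumes "1 \<le> m"
  shows "x ^ (2 * m - 1) = x ^ (2 * m - 2) * x"
    and "x ^ (2 * m) = x ^ (2 * m - 2) * x ^ 2"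
    and "x ^ (4 * m - 2) = (x ^ (2 * m - 2)) ^ 2 * x ^ 2"
proof -
  have "2 * m - 1 = (2 * m - 2) + 1" "2 * m = (2 * m - 2) + 2" "4 * m - 2 = (2 * m - 2) * 2 + 2"
    using assms by simp_all
  then show "x ^ (2 * m - 1) = x ^ (2 * m - 2) * x"
    and "x ^ (2 * m) = x ^ (2 * m - 2) * x ^ 2"
    and "x ^ (4 * m - 2) = (x ^ (2 * m - 2)) ^ 2 * x ^ 2"
    by (metis power_add power_one_right, metis power_add, metis power_add power_mult)
qed

lemma sqrt_add_le_two_sqrt:
  fixes a t :: real
  assumes "0 \<le> a"
  shows "sqrt a + t \<le> 2 * sqrt (a + t ^ 2)"
proof -
  have square: "(sqrt a + t) ^ 2 = a + 2 * sqrt a * t + t ^ 2"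
    using assms by (simp add: power2_sum)
  have "(sqrt a + t) ^ 2 \<le> 4 * (a + t ^ 2)"
    unfolding square using sum_squares_bound[of "sqrt a" t] real_sqrt_pow2[OF assms] assms zero_le_power2[of t]
    by (smt (verit))
  then have "sqrt a + t \<le> sqrt (4 * (a + t ^ 2))"
    by (rule real_le_rsqrt)
  then show ?thesis
    by (simp only: real_sqrt_mult real_sqrt_four)
qed

lemma ln_one_plus_le:
  fixes u :: real
  assumes "0 \<le> u"
  shows "ln (1 + u) \<le> 1 + max 0 (ln u)"
proof (cases "u \<le> 1")
  case True
  then show ?thesis
    using assms ln_le_minus_one[of "1 + u"] by simp
next
  case False
  then have "ln (1 + u) \<le> ln (2 * u)"
    by simp
  also have "\<dots> = ln 2 + ln u"
    using False by (simp add: ln_mult)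
  finally show ?thesis
    using ln_2_less_1 by simp
qed

lemma power_mult_sum_squares_le:
  fixes b t :: real
  assumes "0 < b" "0 \<le> t"
  shows "b ^ n * (b ^ 2 + t ^ 2) \<le> 2 * sqrt (b ^ (2 * n + 4) + t ^ (2 * n + 4))"
proof -
  have cross: "b ^ (2 * n) * t ^ 4 \<le> b ^ (2 * n + 4) + t ^ (2 * n + 4)"
  proof (cases "t \<le> b")
    case True
    then have "b ^ (2 * n) * t ^ 4 \<le> b ^ (2 * n) * b ^ 4"
      using assms by (intro mult_left_mono power_mono) auto
    then show ?thesis
      using assms by (simp add: power_add add_increasing2)
  next
    case False
    then have "b ^ (2 * n) * t ^ 4 \<le> t ^ (2 * n) * t ^ 4"
      using assms by (intro mult_right_mono power_mono) auto
    then show ?thesis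
      using assms by (simp add: power_add add_increasing)
  qed
  have "(b ^ 2 + t ^ 2) ^ 2 \<le> 2 * (b ^ 4 + t ^ 4)"
    using zero_le_power2[of "b ^ 2 - t ^ 2"] by (simp add: power2_eq_square algebra_simps power4_eq_xxxx)
  then have "b ^ (2 * n) * (b ^ 2 + t ^ 2) ^ 2 \<le> b ^ (2 * n) * (2 * (b ^ 4 + t ^ 4))"
    by (rule mult_left_mono) simp
  moreover have "(b ^ n * (b ^ 2 + t ^ 2)) ^ 2 = b ^ (2 * n) * (b ^ 2 + t ^ 2) ^ 2"
    by (simp add: power_mult_distrib power_mult[symmetric] mult.commute)
  ultimately have "(b ^ n * (b ^ 2 + t ^ 2)) ^ 2 \<le> b ^ (2 * n) * (2 * (b ^ 4 + t ^ 4))"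
    by simp
  also have "\<dots> = 2 * b ^ (2 * n + 4) + 2 * (b ^ (2 * n) * t ^ 4)"
    by (simp add: algebra_simps power_add)
  also have "\<dots> \<le> 4 * (b ^ (2 * n + 4) + t ^ (2 * n + 4))"
    using cross zero_le_power[OF assms(2), of "2 * n + 4"] by (smt (verit))
  finally have "b ^ n * (b ^ 2 + t ^ 2) \<le> sqrt (4 * (b ^ (2 * n + 4) + t ^ (2 * n + 4)))"
    by (rule real_le_rsqrt)
  then show ?thesis
    by (simp only: real_sqrt_mult real_sqrt_four)
qed

lemma even_power_ratio_le:
  fixes b t :: real
  assumes "2 \<le> m" "0 < b" "0 \<le> t"
  shows "b ^ (2 * m) / (2 * sqrt (b ^ (2 * m) + t ^ (2 * m))) \<le> b ^ (m + 2) / (b ^ 2 + t ^ 2)"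
proof -
  obtain n where m: "m = n + 2"
    using assms(1) le_Suc_ex by (metis add.commute)
  let ?S = "sqrt (b ^ (2 * m) + t ^ (2 * m))"
  have "2 * m = 2 * n + 4"
    using m by simp
  then have bound: "b ^ n * (b ^ 2 + t ^ 2) \<le> 2 * ?S"
    using power_mult_sum_squares_le[OF assms(2,3), of n] by simp
  have "b ^ (2 * m) = b ^ (m + 2) * b ^ n"
    using m by (simp add: mult_2 flip: power_add)
  then have "b ^ (2 * m) * (b ^ 2 + t ^ 2) = b ^ (m + 2) * (b ^ n * (b ^ 2 + t ^ 2))"
    by (metis mult.assoc)
  also have "\<dots> \<le> b ^ (m + 2) * (2 * ?S)"
    using assms(2) bound by (intro mult_left_mono) auto
  finally show ?thesis
    using assms(2) by (simp add: divide_simps add_pos_nonneg power_mult)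
qed

section \<open>Antiderivatives\<close>

lemma oriented_integral_has_vector_derivative:
  fixes g :: "real \<Rightarrow> 'a::banach"
  assumes "continuous_on UNIV g"
  shows "((\<lambda>y. if 0 \<le> y then integral {0..y} g else - integral {y..0} g)
           has_vector_derivative g x) (at x)"
proof -
  define a where "a = min x 0 - 1"
  define b where "b = max x 0 + 1"
  let ?G = "\<lambda>u. integral {a..u} g"
  have int: "g integrable_on {c..d}" for c d
    using assms by (intro integrable_continuous_real) (auto intro: continuous_on_subset)
  have "(?G has_vector_derivative g x) (at x within {a..b})"
    using assms by (intro integral_has_vector_derivative) (auto intro: continuous_on_subset simp: a_def b_def)
  moreover have "x \<in> interior {a..b}"
    by (auto simp: a_def b_def)
  ultimately have "(?G has_vector_derivative g x) (at x)"
    using at_within_interior by metis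
  then have "((\<lambda>u. ?G u - ?G 0) has_vector_derivative g x) (at x)"
    by (auto intro!: derivative_eq_intros)
  then show ?thesis
  proof (rule has_vector_derivative_transform_within_open)
    fix y assume "y \<in> {a<..}"
    then show "?G y - ?G 0 = (if 0 \<le> y then integral {0..y} g else - integral {y..0} g)"
      using Henstock_Kurzweil_Integration.integral_combine[OF _ _ int, of a 0 y]
        Henstock_Kurzweil_Integration.integral_combine[OF _ _ int, of a y 0]
      by (auto simp: a_def algebra_simps)
  qed (auto simp: a_def)
qed

lemma abs_le_of_derivative_le:
  fixes P F p q :: "real \<Rightarrow> real"
  assumes "\<And>t. 0 \<le> t \<Longrightarrow> (P has_real_derivative p t) (at t)" "\<And>t. 0 \<le> t \<Longrightarrow> 0 \<le> p t"
    and "\<And>t. 0 \<le> t \<Longrightarrow> (F has_real_derivative q t) (at t)" "\<And>t. 0 \<le> t \<Longrightarrow> p t \<le> q t"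
    and "P 0 = 0" "F 0 = 0" "0 \<le> x"
  shows "\<bar>P x\<bar> \<le> F x"
proof -
  have "P 0 \<le> P x"
    using assms(1,2,7) by (intro DERIV_nonneg_imp_nondecreasing[of 0 x P]) auto
  moreover have "F 0 - P 0 \<le> F x - P x"
  proof (rule DERIV_nonneg_imp_nondecreasing[of 0 x "\<lambda>t. F t - P t"])
    fix t assume "0 \<le> t" "t \<le> x"
    with assms(1,3,4) show "\<exists>y. ((\<lambda>t. F t - P t) has_real_derivative y) (at t) \<and> 0 \<le> y"
      by (intro exI[of _ "q t - p t"]) (auto intro: DERIV_diff)
  qed (rule assms(7))
  ultimately show ?thesis
    using assms(5,6) by simp
qed

lemma abs_le_of_even_derivative_le:
  fixes P F p q :: "real \<Rightarrow> real"
  assumes "\<And>t. (P has_real_derivative p t) (at t)" "\<And>t. 0 \<le> p t" "\<And>t. p (- t) = p t"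
    and "\<And>t. 0 \<le> t \<Longrightarrow> (F has_real_derivative q t) (at t)" "\<And>t. 0 \<le> t \<Longrightarrow> p t \<le> q t"
    and "P 0 = 0" "F 0 = 0"
  shows "\<bar>P x\<bar> \<le> F \<bar>x\<bar>"
proof (cases "0 \<le> x")
  case True
  then show ?thesis
    using abs_le_of_derivative_le[of P p F q x] assms by simp
next
  case False
  have "((\<lambda>t. - P (- t)) has_real_derivative p t) (at t)" for t
  proof -
    from assms(1)[of "- t"] have "((\<lambda>x. P (- x)) has_real_derivative - p (- t)) (at t)"
      by (simp only: DERIV_mirror)
    from DERIV_minus[OF this] show ?thesis
      using assms(3) by simp
  qed
  then have "\<bar>- P (- (- x))\<bar> \<le> F (- x)"
    using False assms by (intro abs_le_of_derivative_le[where p = p and q = q]) auto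
  with False show ?thesis
    by simp
qed

definition phi_radicand :: "nat \<Rightarrow> real \<Rightarrow> real \<Rightarrow> real \<Rightarrow> real \<Rightarrow> complex" where
  "phi_radicand m \<alpha> \<mu> h y = E_par m \<alpha> \<mu> h + complex_of_real (y ^ (2 * m) / real m)"

lemma Re_phi_radicand:
  "Re (phi_radicand m \<alpha> \<mu> h y) = \<alpha> * h powr (2 * real m / (real m + 1)) + y ^ (2 * m) / real m"
  by (simp add: phi_radicand_def E_par_def)

lemma Im_phi_radicand:
  "Im (phi_radicand m \<alpha> \<mu> h y) = \<mu> * h powr (2 * real m / (real m + 1))"
  by (simp add: phi_radicand_def E_par_def)

lemma Im_phi_radicand_pos: "0 < \<mu> \<Longrightarrow> 0 < h \<Longrightarrow> 0 < Im (phi_radicand m \<alpha> \<mu> h y)"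
  by (simp add: Im_phi_radicand)

lemma phi_integrand_eq_csqrt:
  "0 < \<mu> \<Longrightarrow> 0 < h \<Longrightarrow> phi_integrand m \<alpha> \<mu> h y = csqrt (phi_radicand m \<alpha> \<mu> h y)"
  unfolding phi_integrand_def phi_radicand_def[symmetric]
  by (rule sqrt_pos_im_eq_csqrt[OF Im_phi_radicand_pos])

lemma phi_integrand_nonzero: "0 < \<mu> \<Longrightarrow> 0 < h \<Longrightarrow> phi_integrand m \<alpha> \<mu> h y \<noteq> 0"
  using Im_phi_radicand_pos[of \<mu> h m \<alpha> y] by (auto simp: phi_integrand_eq_csqrt)

lemma phi_integrand_minus: "phi_integrand m \<alpha> \<mu> h (- t) = phi_integrand m \<alpha> \<mu> h t"
  by (simp add: phi_integrand_def power_mult)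

lemma Im_phi_integrand_pos: "0 < \<mu> \<Longrightarrow> 0 < h \<Longrightarrow> 0 < Im (phi_integrand m \<alpha> \<mu> h t)"
  by (simp only: phi_integrand_eq_csqrt Im_csqrt_pos Im_phi_radicand_pos)

lemma Re_phi_radicand_ge:
  "min \<alpha> (1 / real m) * (h powr (2 * real m / (real m + 1)) + y ^ (2 * m))
     \<le> Re (phi_radicand m \<alpha> \<mu> h y)"
proof -
  let ?e = "h powr (2 * real m / (real m + 1))"
  have "min \<alpha> (1 / real m) * ?e \<le> \<alpha> * ?e"
    by (intro mult_right_mono) auto
  moreover have "min \<alpha> (1 / real m) * y ^ (2 * m) \<le> y ^ (2 * m) / real m"
    using mult_right_mono[of "min \<alpha> (1 / real m)" "1 / real m" "y ^ (2 * m)"]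
    by (simp add: power_mult)
  ultimately show ?thesis
    by (simp add: Re_phi_radicand distrib_left)
qed

lemma norm_phi_radicand_le:
  "cmod (phi_radicand m \<alpha> \<mu> h y)
     \<le> max (cmod (Complex \<alpha> \<mu>)) 1 * (h powr (2 * real m / (real m + 1)) + y ^ (2 * m))"
proof -
  let ?e = "h powr (2 * real m / (real m + 1))" and ?D = "max (cmod (Complex \<alpha> \<mu>)) 1"
  have X: "0 \<le> y ^ (2 * m)"
    by (simp add: power_mult)
  have "cmod (phi_radicand m \<alpha> \<mu> h y) \<le> cmod (E_par m \<alpha> \<mu> h) + cmod (complex_of_real (y ^ (2 * m) / real m))"
    unfolding phi_radicand_def by (rule norm_triangle_ineq)
  also have "\<dots> = cmod (Complex \<alpha> \<mu>) * ?e + y ^ (2 * m) / real m"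
    using X by (simp add: E_par_def norm_mult del: of_real_divide of_real_power)
  also have "\<dots> \<le> ?D * ?e + ?D * y ^ (2 * m)"
  proof (intro add_mono mult_right_mono)
    have "y ^ (2 * m) / real m \<le> y ^ (2 * m)"
      using X by (cases "m = 0") (simp_all add: divide_le_eq mult_le_cancel_left1)
    also have "\<dots> \<le> ?D * y ^ (2 * m)"
      using X mult_right_mono[of 1 ?D] by simp
    finally show "y ^ (2 * m) / real m \<le> ?D * y ^ (2 * m)" .
  qed simp_all
  finally show ?thesis
    by (simp only: distrib_left)
qed

section \<open>Derivatives of the phase\<close>

lemma phi_radicand_has_vector_derivative:
  assumes "1 \<le> m"
  shows "(phi_radicand m \<alpha> \<mu> h has_vector_derivative complex_of_real (2 * x ^ (2 * m - 1))) (at x)"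
proof -
  have "((\<lambda>y. y ^ (2 * m) / real m) has_real_derivative real (2 * m) * x ^ (2 * m - 1) / real m) (at x)"
    by (auto intro!: derivative_eq_intros)
  moreover have "real (2 * m) * x ^ (2 * m - 1) / real m = 2 * x ^ (2 * m - 1)"
    using assms by simp
  ultimately have "((\<lambda>y. complex_of_real (y ^ (2 * m) / real m))
      has_vector_derivative complex_of_real (2 * x ^ (2 * m - 1))) (at x)"
    by (intro has_vector_derivative_of_real) simp
  then show ?thesis
    unfolding phi_radicand_def add.commute[of "E_par m \<alpha> \<mu> h"] has_vector_derivative_add_const .
qed

lemma phi_integrand_has_vector_derivative:
  assumes "1 \<le> m" "0 < \<mu>" "0 < h"
  shows "(phi_integrand m \<alpha> \<mu> h has_vector_derivative
           complex_of_real (x ^ (2 * m - 1)) * inverse (phi_integrand m \<alpha> \<mu> h x)) (at x)"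
proof -
  let ?w = "phi_radicand m \<alpha> \<mu> h"
  have "?w x \<notin> \<real>\<^sub>\<le>\<^sub>0"
    using Im_phi_radicand_pos[OF assms(2,3), of m \<alpha> x] by (auto simp: complex_nonpos_Reals_iff)
  then have "((csqrt \<circ> ?w) has_vector_derivative
      complex_of_real (2 * x ^ (2 * m - 1)) * inverse (2 * csqrt (?w x))) (at x)"
    by (intro field_vector_diff_chain_at phi_radicand_has_vector_derivative has_field_derivative_csqrt assms(1))
  moreover have "csqrt \<circ> ?w = phi_integrand m \<alpha> \<mu> h"
    using assms by (auto simp: phi_integrand_eq_csqrt)
  ultimately show ?thesis
    using assms by (simp add: phi_integrand_eq_csqrt)
qed

lemma phi_has_vector_derivative:
  assumes "1 \<le> m" "0 < \<mu>" "0 < h"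
  shows "(phi m \<alpha> \<mu> h has_vector_derivative phi_integrand m \<alpha> \<mu> h x) (at x)"
proof -
  have "continuous_on UNIV (phi_integrand m \<alpha> \<mu> h)"
    by (rule continuous_on_vector_derivative, rule has_vector_derivative_at_within,
        rule phi_integrand_has_vector_derivative[OF assms])
  then show ?thesis
    unfolding phi_def[abs_def] by (rule oriented_integral_has_vector_derivative)
qed

lemma phi_zero [simp]: "phi m \<alpha> \<mu> h 0 = 0"
  by (simp add: phi_def)

lemma phi1_eq:
  assumes "1 \<le> m" "0 < \<mu>" "0 < h"
  shows "phi1 m \<alpha> \<mu> h = phi_integrand m \<alpha> \<mu> h"
  unfolding phi1_def fun_eq_iff
  using phi_has_vector_derivative[OF assms] vector_derivative_at by blast

lemma phi2_eq:
  assumes "1 \<le> m" "0 < \<mu>" "0 < h"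
  shows "phi2 m \<alpha> \<mu> h = (\<lambda>x. complex_of_real (x ^ (2 * m - 1)) * inverse (phi_integrand m \<alpha> \<mu> h x))"
  unfolding phi2_def fun_eq_iff phi1_eq[OF assms]
  using phi_integrand_has_vector_derivative[OF assms] vector_derivative_at by blast

lemma quotient_rule_radicand_identity:
  fixes G E :: complex and p x r :: real
  assumes "G \<noteq> 0" "G ^ 2 = E + complex_of_real (p * x ^ 2 / r)" "r \<noteq> 0"
  shows "complex_of_real (p * x) * (complex_of_real (p * x) * inverse G * - (inverse G ^ 2))
           + complex_of_real ((2 * r - 1) * p) * inverse G
         = (complex_of_real ((1 - 1 / r) * (p ^ 2 * x ^ 2)) + E * complex_of_real ((2 * r - 1) * p))
           * inverse (G ^ 3)"
proof -
  have "complex_of_real (p * x) * (complex_of_real (p * x) * inverse G * - (inverse G ^ 2))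
      + complex_of_real ((2 * r - 1) * p) * inverse G
    = (complex_of_real ((2 * r - 1) * p) * G ^ 2 - complex_of_real (p ^ 2 * x ^ 2)) * inverse (G ^ 3)"
    using assms(1) by (simp add: field_simps power2_eq_square power3_eq_cube)
  also have "\<dots> = (complex_of_real ((1 - 1 / r) * (p ^ 2 * x ^ 2))
      + E * complex_of_real ((2 * r - 1) * p)) * inverse (G ^ 3)"
    unfolding assms(2) using assms(3) by (simp add: field_simps power2_eq_square)
  finally show ?thesis .
qed

lemma phi2_has_vector_derivative:
  assumes "1 \<le> m" "0 < \<mu>" "0 < h"
  shows "(phi2 m \<alpha> \<mu> h has_vector_derivative
           (complex_of_real ((1 - 1 / real m) * x ^ (4 * m - 2))
              + E_par m \<alpha> \<mu> h * complex_of_real ((2 * real m - 1) * x ^ (2 * m - 2)))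
           * inverse (phi_integrand m \<alpha> \<mu> h x ^ 3)) (at x)"
proof -
  let ?g = "phi_integrand m \<alpha> \<mu> h"
  define G where "G = ?g x"
  define p where "p = x ^ (2 * m - 2)"
  note pw = power_split_even[OF assms(1), of x, folded p_def]
  have G_nz: "G \<noteq> 0"
    using phi_integrand_nonzero[OF assms(2,3)] by (simp add: G_def)
  have G_sq: "G ^ 2 = E_par m \<alpha> \<mu> h + complex_of_real (p * x ^ 2 / real m)"
    using assms by (simp add: G_def phi_integrand_eq_csqrt phi_radicand_def pw(2) del: of_real_mult)
  have "((\<lambda>y. y ^ (2 * m - 1)) has_real_derivative real (2 * m - 1) * x ^ (2 * m - 1 - Suc 0)) (at x)"
    by (rule DERIV_pow)
  moreover have "real (2 * m - 1) * x ^ (2 * m - 1 - Suc 0) = (2 * real m - 1) * p"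
    using assms(1) by (simp add: p_def of_nat_diff numeral_2_eq_2)
  ultimately have d_pow: "((\<lambda>y. complex_of_real (y ^ (2 * m - 1)))
      has_vector_derivative complex_of_real ((2 * real m - 1) * p)) (at x)"
    by (intro has_vector_derivative_of_real) simp
  have d_inv: "((inverse \<circ> ?g) has_vector_derivative
      complex_of_real (p * x) * inverse G * - (inverse G ^ 2)) (at x)"
    using field_vector_diff_chain_at[OF phi_integrand_has_vector_derivative[OF assms]
        DERIV_inverse[OF G_nz[unfolded G_def]]]
    unfolding pw(1) G_def[symmetric] by (simp only: numeral_2_eq_2)
  have "((\<lambda>y. complex_of_real (y ^ (2 * m - 1)) * inverse (?g y)) has_vector_derivative
      complex_of_real (p * x) * (complex_of_real (p * x) * inverse G * - (inverse G ^ 2))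
      + complex_of_real ((2 * real m - 1) * p) * inverse G) (at x)"
    using has_vector_derivative_mult[OF d_pow d_inv] unfolding pw(1) o_def G_def[symmetric] .
  also have "complex_of_real (p * x) * (complex_of_real (p * x) * inverse G * - (inverse G ^ 2))
      + complex_of_real ((2 * real m - 1) * p) * inverse G
    = (complex_of_real ((1 - 1 / real m) * (p ^ 2 * x ^ 2))
      + E_par m \<alpha> \<mu> h * complex_of_real ((2 * real m - 1) * p)) * inverse (G ^ 3)"
    using assms(1) by (intro quotient_rule_radicand_identity[OF G_nz G_sq]) simp
  finally show ?thesis
    unfolding phi2_eq[OF assms] power_split_even(3)[OF assms(1)] G_def p_def .
qed

lemma f_pot_eq:
  assumes "1 \<le> m" "0 < \<mu>" "0 < h"
  shows "f_pot m \<alpha> \<mu> h x =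
           - complex_of_real (h ^ 2 * x ^ (2 * m - 2)) *
             (complex_of_real ((1/4 + 1 / (2 * real m)) * x ^ (2 * m))
              - complex_of_real (real m - 1/2) * E_par m \<alpha> \<mu> h)
             * inverse (phi1 m \<alpha> \<mu> h x ^ 4)"
proof -
  let ?E = "E_par m \<alpha> \<mu> h"
  define G where "G = phi_integrand m \<alpha> \<mu> h x"
  define p where "p = x ^ (2 * m - 2)"
  note pw = power_split_even[OF assms(1), of x, folded p_def]
  have G_nz: "G \<noteq> 0"
    using phi_integrand_nonzero[OF assms(2,3)] by (simp add: G_def)
  have phi3: "phi3 m \<alpha> \<mu> h x = (complex_of_real ((1 - 1 / real m) * (p ^ 2 * x ^ 2))
      + ?E * complex_of_real ((2 * real m - 1) * p)) * inverse (G ^ 3)"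
    unfolding phi3_def G_def p_def power_split_even(3)[OF assms(1), symmetric]
    by (rule vector_derivative_at[OF phi2_has_vector_derivative[OF assms]])
  have phi2: "phi2 m \<alpha> \<mu> h x = complex_of_real (p * x) * inverse G"
    by (simp only: phi2_eq[OF assms] G_def pw(1))
  have phi1: "phi1 m \<alpha> \<mu> h x = G"
    by (simp add: phi1_eq[OF assms] G_def)
  have "f_pot m \<alpha> \<mu> h x = - complex_of_real (h ^ 2) *
      (3/4 * inverse (G ^ 2) * (complex_of_real (p * x) * inverse G) ^ 2
       - 1/2 * inverse G * ((complex_of_real ((1 - 1 / real m) * (p ^ 2 * x ^ 2))
          + ?E * complex_of_real ((2 * real m - 1) * p)) * inverse (G ^ 3)))"
    unfolding f_pot_def phi1 phi2 phi3 ..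
  also have "\<dots> = - complex_of_real (h ^ 2 * p) *
      (complex_of_real ((1/4 + 1 / (2 * real m)) * (p * x ^ 2))
       - complex_of_real (real m - 1/2) * ?E) * inverse (G ^ 4)"
    using G_nz assms(1) by (simp add: field_simps power2_eq_square power3_eq_cube power4_eq_xxxx)
  finally show ?thesis
    unfolding phi1 pw(2) p_def .
qed

lemma phi_derivative_formulas:
  assumes "1 \<le> m" "0 < \<mu>" "0 < h"
  shows "(phi m \<alpha> \<mu> h has_vector_derivative
           sqrt_pos_im (E_par m \<alpha> \<mu> h + complex_of_real (x ^ (2 * m) / real m))) (at x)"
    and "(phi1 m \<alpha> \<mu> h has_vector_derivative
           complex_of_real (x ^ (2 * m - 1)) * inverse (phi1 m \<alpha> \<mu> h x)) (at x)"
    and "(phi2 m \<alpha> \<mu> h has_vector_derivative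
           (complex_of_real ((1 - 1 / real m) * x ^ (4 * m - 2))
              + E_par m \<alpha> \<mu> h * complex_of_real ((2 * real m - 1) * x ^ (2 * m - 2)))
           * inverse (phi1 m \<alpha> \<mu> h x ^ 3)) (at x)"
  using phi_has_vector_derivative[OF assms, of \<alpha> x] phi_integrand_has_vector_derivative[OF assms]
    phi2_has_vector_derivative[OF assms]
  by (simp_all only: phi_integrand_def phi1_eq[OF assms])

section \<open>Size of the derivative\<close>

lemma norm_phi1_bounds:
  fixes x :: real
  assumes "1 \<le> m" "0 < \<mu>" "0 < h"
  defines "S \<equiv> sqrt (h powr (2 * real m / (real m + 1)) + x ^ (2 * m))"
  shows "sqrt (min \<alpha> (1 / real m)) * S \<le> cmod (phi1 m \<alpha> \<mu> h x)"
    and "cmod (phi1 m \<alpha> \<mu> h x) \<le> sqrt (max (cmod (Complex \<alpha> \<mu>)) 1) * S"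
proof -
  let ?w = "phi_radicand m \<alpha> \<mu> h x"
  have norm_phi1: "cmod (phi1 m \<alpha> \<mu> h x) = sqrt (cmod ?w)"
    using assms by (simp add: phi1_eq phi_integrand_eq_csqrt)
  have "sqrt (min \<alpha> (1 / real m)) * S \<le> sqrt (Re ?w)"
    using Re_phi_radicand_ge[of \<alpha> m h x \<mu>] by (simp add: S_def real_sqrt_mult[symmetric])
  also have "\<dots> \<le> cmod (phi1 m \<alpha> \<mu> h x)"
    unfolding norm_phi1 by (simp add: complex_Re_le_cmod)
  finally show "sqrt (min \<alpha> (1 / real m)) * S \<le> cmod (phi1 m \<alpha> \<mu> h x)" .
  show "cmod (phi1 m \<alpha> \<mu> h x) \<le> sqrt (max (cmod (Complex \<alpha> \<mu>)) 1) * S"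
    unfolding norm_phi1 using norm_phi_radicand_le[of m \<alpha> \<mu> h x]
    by (simp add: S_def real_sqrt_mult[symmetric])
qed

lemma norm_phi1_comparable:
  assumes "1 \<le> m" "0 < \<alpha>" "0 < \<mu>"
  shows "\<exists>C>0. \<forall>h x. 0 < h \<and> h \<le> 1 \<longrightarrow>
           inverse C * sqrt (h powr (2 * real m / (real m + 1)) + x ^ (2 * m)) \<le> cmod (phi1 m \<alpha> \<mu> h x)
           \<and> cmod (phi1 m \<alpha> \<mu> h x) \<le> C * sqrt (h powr (2 * real m / (real m + 1)) + x ^ (2 * m))"
proof -
  define c where "c = min \<alpha> (1 / real m)"
  define C where "C = max (sqrt (max (cmod (Complex \<alpha> \<mu>)) 1)) (1 / sqrt c)"
  have c_pos: "0 < c"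
    using assms by (simp add: c_def)
  have C_pos: "0 < C"
    using c_pos by (simp add: C_def less_max_iff_disj)
  have inverse_C: "inverse C \<le> sqrt c"
    using c_pos le_imp_inverse_le[of "1 / sqrt c" C] by (simp add: C_def)
  show ?thesis
  proof (intro exI conjI allI impI)
    fix h x :: real assume "0 < h \<and> h \<le> 1"
    then have h: "0 < h"
      by simp
    let ?S = "sqrt (h powr (2 * real m / (real m + 1)) + x ^ (2 * m))"
    have S_nonneg: "0 \<le> ?S"
      by (simp add: power_mult)
    have "inverse C * ?S \<le> sqrt c * ?S"
      using inverse_C S_nonneg by (rule mult_right_mono)
    also have "\<dots> \<le> cmod (phi1 m \<alpha> \<mu> h x)"
      using norm_phi1_bounds(1)[OF assms(1,3) h] by (simp add: c_def)
    finally show "inverse C * ?S \<le> cmod (phi1 m \<alpha> \<mu> h x)" .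
    have "cmod (phi1 m \<alpha> \<mu> h x) \<le> sqrt (max (cmod (Complex \<alpha> \<mu>)) 1) * ?S"
      by (rule norm_phi1_bounds(2)[OF assms(1,3) h])
    also have "\<dots> \<le> C * ?S"
      using S_nonneg by (intro mult_right_mono) (simp_all add: C_def)
    finally show "cmod (phi1 m \<alpha> \<mu> h x) \<le> C * ?S" .
  qed (rule C_pos)
qed

section \<open>Size of the imaginary part\<close>

lemma Im_phi_integrand_le:
  assumes "1 \<le> m" "0 < \<alpha>" "0 < \<mu>" "0 < h"
  defines "e \<equiv> h powr (2 * real m / (real m + 1))"
  shows "Im (phi_integrand m \<alpha> \<mu> h t)
           \<le> \<mu> / sqrt (min \<alpha> (1 / real m)) * e / (2 * sqrt (e + t ^ (2 * m)))"
proof -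
  let ?c = "min \<alpha> (1 / real m)" and ?w = "phi_radicand m \<alpha> \<mu> h t"
  have lower: "sqrt ?c * sqrt (e + t ^ (2 * m)) \<le> sqrt (Re ?w)"
    using Re_phi_radicand_ge[of \<alpha> m h t \<mu>] by (simp add: e_def real_sqrt_mult[symmetric])
  have pos: "0 < sqrt ?c * sqrt (e + t ^ (2 * m))"
    using assms by (simp add: e_def add_pos_nonneg power_mult)
  have "0 < sqrt (Re ?w)"
    using pos lower by linarith
  then have "Im (phi_integrand m \<alpha> \<mu> h t) \<le> Im ?w / (2 * sqrt (Re ?w))"
    unfolding phi_integrand_eq_csqrt[OF assms(3,4)]
    using Im_phi_radicand_pos[OF assms(3,4), of m \<alpha> t]
    by (intro Im_sqrt_le[OF power2_csqrt Re_csqrt]) auto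
  also have "\<dots> \<le> \<mu> * e / (2 * (sqrt ?c * sqrt (e + t ^ (2 * m))))"
    unfolding Im_phi_radicand e_def[symmetric]
    using pos lower assms(3,4) by (intro frac_le) (auto simp: e_def)
  also have "\<dots> = \<mu> / sqrt ?c * e / (2 * sqrt (e + t ^ (2 * m)))"
    by simp
  finally show ?thesis .
qed

lemma abs_Im_phi_le_even_bound:
  fixes F q :: "real \<Rightarrow> real"
  assumes "1 \<le> m" "0 < \<mu>" "0 < h"
    and "\<And>t. 0 \<le> t \<Longrightarrow> (F has_real_derivative q t) (at t)"
    and "\<And>t. 0 \<le> t \<Longrightarrow> Im (phi_integrand m \<alpha> \<mu> h t) \<le> q t" "F 0 = 0"
  shows "\<bar>Im (phi m \<alpha> \<mu> h x)\<bar> \<le> F \<bar>x\<bar>"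
proof (rule abs_le_of_even_derivative_le[where p = "\<lambda>t. Im (phi_integrand m \<alpha> \<mu> h t)"])
  show "((\<lambda>t. Im (phi m \<alpha> \<mu> h t)) has_real_derivative Im (phi_integrand m \<alpha> \<mu> h t)) (at t)" for t
    by (rule has_field_derivative_Im[OF phi_has_vector_derivative[OF assms(1-3)]])
  show "0 \<le> Im (phi_integrand m \<alpha> \<mu> h t)" for t
    using Im_phi_integrand_pos[OF assms(2,3)] less_imp_le by blast
qed (use assms phi_integrand_minus in auto)

lemma abs_Im_phi_le_log:
  assumes "0 < \<alpha>" "0 < \<mu>" "0 < h"
  shows "\<bar>Im (phi 1 \<alpha> \<mu> h x)\<bar> \<le> \<mu> / sqrt (min \<alpha> 1) * (h * (1 + max 0 (ln (\<bar>x\<bar> / sqrt h))))"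
proof -
  define K where "K = \<mu> / sqrt (min \<alpha> 1)"
  have K_pos: "0 < K"
    using assms by (simp add: K_def)
  have sqrt_h: "0 < sqrt h"
    using assms by simp
  have "\<bar>Im (phi 1 \<alpha> \<mu> h x)\<bar> \<le> K * h * ln (1 + \<bar>x\<bar> / sqrt h)"
  proof (rule abs_Im_phi_le_even_bound[where q = "\<lambda>t. K * h / (sqrt h + t)"])
    fix t :: real assume t: "0 \<le> t"
    with sqrt_h have "0 < sqrt h + t"
      by linarith
    with sqrt_h show "((\<lambda>t. K * h * ln (1 + t / sqrt h)) has_real_derivative K * h / (sqrt h + t)) (at t)"
      by (auto intro!: derivative_eq_intros simp: field_simps)
    have "Im (phi_integrand 1 \<alpha> \<mu> h t) \<le> K * h / (2 * sqrt (h + t ^ 2))"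
      using Im_phi_integrand_le[of 1 \<alpha> \<mu> h t] assms by (simp add: K_def)
    also have "\<dots> \<le> K * h / (sqrt h + t)"
      using K_pos assms t sqrt_add_le_two_sqrt[of h t]
      by (intro frac_le) (auto simp: add_pos_nonneg)
    finally show "Im (phi_integrand 1 \<alpha> \<mu> h t) \<le> K * h / (sqrt h + t)" .
  qed (use assms in auto)
  also have "\<dots> \<le> K * (h * (1 + max 0 (ln (\<bar>x\<bar> / sqrt h))))"
    using ln_one_plus_le[of "\<bar>x\<bar> / sqrt h"] K_pos assms sqrt_h by (simp add: mult_left_mono)
  finally show ?thesis
    by (simp add: K_def)
qed

lemma abs_Im_phi_le_linear:
  assumes "2 \<le> m" "0 < \<alpha>" "0 < \<mu>" "0 < h"
  shows "\<bar>Im (phi m \<alpha> \<mu> h x)\<bar> \<le> 2 * \<mu> / sqrt (min \<alpha> (1 / real m)) * h"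
proof -
  define K where "K = \<mu> / sqrt (min \<alpha> (1 / real m))"
  define b where "b = h powr (1 / (real m + 1))"
  have K_pos: "0 < K"
    using assms by (simp add: K_def)
  have b_pos: "0 < b"
    using assms by (simp add: b_def)
  have b_pow: "b ^ k = h powr (real k / (real m + 1))" for k
    using assms by (simp add: b_def powr_powr powr_realpow[symmetric])
  have "b ^ (m + 1) = h"
    unfolding b_pow using assms by (simp add: add.commute)
  moreover have "b ^ (m + 2) = b ^ (m + 1) * b"
    by simp
  ultimately have h_b: "h * b = b ^ (m + 2)"
    by simp
  have "\<bar>Im (phi m \<alpha> \<mu> h x)\<bar> \<le> K * h * arctan (\<bar>x\<bar> / b)"
  proof (rule abs_Im_phi_le_even_bound[where q = "\<lambda>t. K * h * b / (b ^ 2 + t ^ 2)"])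
    show "((\<lambda>t. K * h * arctan (t / b)) has_real_derivative K * h * b / (b ^ 2 + t ^ 2)) (at t)" for t
      using b_pos by (auto intro!: derivative_eq_intros simp: field_simps power2_eq_square)
    fix t :: real assume t: "0 \<le> t"
    have "Im (phi_integrand m \<alpha> \<mu> h t) \<le> K * (b ^ (2 * m) / (2 * sqrt (b ^ (2 * m) + t ^ (2 * m))))"
      using Im_phi_integrand_le[of m \<alpha> \<mu> h t] assms by (simp add: K_def b_pow)
    also have "\<dots> \<le> K * (b ^ (m + 2) / (b ^ 2 + t ^ 2))"
      using even_power_ratio_le[OF assms(1) b_pos t] K_pos by (intro mult_left_mono) auto
    finally show "Im (phi_integrand m \<alpha> \<mu> h t) \<le> K * h * b / (b ^ 2 + t ^ 2)"
      by (simp add: h_b mult.assoc)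
  qed (use assms in auto)
  also have "\<dots> \<le> K * h * 2"
    using arctan_ubound[of "\<bar>x\<bar> / b"] pi_less_4 K_pos assms(4)
    by (intro mult_left_mono) auto
  finally show ?thesis
    by (simp add: K_def mult_ac)
qed

lemma Im_phi_bound:
  assumes "1 \<le> m" "0 < \<alpha>" "0 < \<mu>"
  shows "\<exists>C>0. \<forall>h x. 0 < h \<and> h \<le> 1 \<longrightarrow>
           \<bar>Im (phi m \<alpha> \<mu> h x)\<bar> \<le> C *
             (if m = 1 then h * (1 + max 0 (ln (\<bar>x\<bar> / sqrt h))) else h)"
proof (cases "m = 1")
  case True
  with abs_Im_phi_le_log[OF assms(2,3)] show ?thesis
    using assms by (intro exI[of _ "\<mu> / sqrt (min \<alpha> 1)"]) auto
next
  case False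
  with abs_Im_phi_le_linear[OF _ assms(2,3)] show ?thesis
    using assms by (intro exI[of _ "2 * \<mu> / sqrt (min \<alpha> (1 / real m))"]) auto
qed

lemma Im_phi_bounded_on_scale:
  assumes "1 \<le> m" "0 < \<alpha>" "0 < \<mu>" "0 < K"
  shows "\<exists>C'>0. \<forall>h x. 0 < h \<and> h \<le> 1 \<and> \<bar>x\<bar> \<le> K * h powr (1 / (real m + 1)) \<longrightarrow>
           \<bar>Im (phi m \<alpha> \<mu> h x)\<bar> \<le> C'"
proof -
  obtain C where C_pos: "0 < C" and C: "\<And>h x. 0 < h \<and> h \<le> 1 \<Longrightarrow>
      \<bar>Im (phi m \<alpha> \<mu> h x)\<bar> \<le> C * (if m = 1 then h * (1 + max 0 (ln (\<bar>x\<bar> / sqrt h))) else h)"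
    using Im_phi_bound[OF assms(1-3)] by blast
  have scale: "(if m = 1 then h * (1 + max 0 (ln (\<bar>x\<bar> / sqrt h))) else h) \<le> 1 + K"
    if h: "0 < h" "h \<le> 1" and x: "\<bar>x\<bar> \<le> K * h powr (1 / (real m + 1))" for h x
  proof (cases "m = 1")
    case True
    then have "\<bar>x\<bar> / sqrt h \<le> K"
      using h x by (simp add: powr_half_sqrt divide_le_eq)
    then have "max 0 (ln (\<bar>x\<bar> / sqrt h)) \<le> K"
      using assms(4) ln_le_minus_one[of "\<bar>x\<bar> / sqrt h"] h
      by (cases "x = 0") auto
    then have "h * (1 + max 0 (ln (\<bar>x\<bar> / sqrt h))) \<le> 1 * (1 + K)"
      using h by (intro mult_mono) auto
    with True show ?thesis
      by simp
  qed (use h assms(4) in simp)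
  show ?thesis
  proof (intro exI conjI allI impI)
    fix h x assume hx: "0 < h \<and> h \<le> 1 \<and> \<bar>x\<bar> \<le> K * h powr (1 / (real m + 1))"
    then have "\<bar>Im (phi m \<alpha> \<mu> h x)\<bar>
        \<le> C * (if m = 1 then h * (1 + max 0 (ln (\<bar>x\<bar> / sqrt h))) else h)"
      by (intro C) simp
    also have "\<dots> \<le> C * (1 + K)"
      using hx C_pos by (intro mult_left_mono scale) auto
    finally show "\<bar>Im (phi m \<alpha> \<mu> h x)\<bar> \<le> C * (1 + K)" .
  qed (use C_pos assms(4) in simp)
qed

theorem lemma5p1:
  fixes m :: nat and \<alpha> \<mu> :: real
  assumes "m \<ge> 1" and "\<alpha> > 0" and "\<mu> > 0"
  shows
    \<comment> \<open>(i)\<close>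
    "(\<exists>C>0. \<forall>h x. 0 < h \<and> h \<le> 1 \<longrightarrow>
        \<bar>Im (phi m \<alpha> \<mu> h x)\<bar> \<le> C *
          (if m = 1 then h * (1 + max 0 (ln (\<bar>x\<bar> / sqrt h))) else h))
     \<and> (\<forall>K>0. \<exists>C'>0. \<forall>h x. 0 < h \<and> h \<le> 1 \<and> \<bar>x\<bar> \<le> K * h powr (1 / (real m + 1)) \<longrightarrow>
        \<bar>Im (phi m \<alpha> \<mu> h x)\<bar> \<le> C')
     \<comment> \<open>(ii)\<close>
     \<and> (\<exists>C>0. \<forall>h x. 0 < h \<and> h \<le> 1 \<longrightarrow>
        inverse C * sqrt (h powr (2 * real m / (real m + 1)) + x ^ (2 * m)) \<le> cmod (phi1 m \<alpha> \<mu> h x)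
        \<and> cmod (phi1 m \<alpha> \<mu> h x) \<le> C * sqrt (h powr (2 * real m / (real m + 1)) + x ^ (2 * m)))
     \<comment> \<open>(iii)\<close>
     \<and> (\<forall>h x. 0 < h \<and> h \<le> 1 \<longrightarrow>
        (phi m \<alpha> \<mu> h has_vector_derivative
           sqrt_pos_im (E_par m \<alpha> \<mu> h + complex_of_real (x ^ (2 * m) / real m))) (at x)
        \<and> (phi1 m \<alpha> \<mu> h has_vector_derivative
           complex_of_real (x ^ (2 * m - 1)) * inverse (phi1 m \<alpha> \<mu> h x)) (at x)
        \<and> (phi2 m \<alpha> \<mu> h has_vector_derivative
           (complex_of_real ((1 - 1 / real m) * x ^ (4 * m - 2))
              + E_par m \<alpha> \<mu> h * complex_of_real ((2 * real m - 1) * x ^ (2 * m - 2)))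
           * inverse (phi1 m \<alpha> \<mu> h x ^ 3)) (at x)
        \<and> f_pot m \<alpha> \<mu> h x =
           - complex_of_real (h ^ 2 * x ^ (2 * m - 2)) *
             (complex_of_real ((1/4 + 1 / (2 * real m)) * x ^ (2 * m))
              - complex_of_real (real m - 1/2) * E_par m \<alpha> \<mu> h)
             * inverse (phi1 m \<alpha> \<mu> h x ^ 4))"
  using Im_phi_bound[OF assms] Im_phi_bounded_on_scale[OF assms]
    norm_phi1_comparable[OF assms] phi_derivative_formulas[OF assms(1,3)] f_pot_eq[OF assms(1,3)]
  by (intro conjI allI impI) simp_all

end
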